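(* For $\alpha=\pi/4$, no deterministic online algorithm can achieve competitive ratio better than $\frac{1+\sqrt2}{2}$.
   Context: Online drone coverage on a line. A drone has a fixed half angle-of-view $\alpha$. A drone at a point $T=(t_x,t_y)$ with $t_y\ge 0$ covers the segment $[t_x-t_y\tan\alpha,\ t_x+t_y\tan\alpha]$ of the $x$-axis. An input is a finite sequence of points $X_0=(0,0),X_1,\dots,X_n$ ($n\ge1$) on the $x$-axis, revealed one at a time. A solution is a sequence of drone positions $P_0=(0,0),P_1,\dots,P_n$ in the closed upper half-plane such that $P_i$ covers $X_0,\dots,X_i$; its cost is $\sum_{i=0}^{n-1}|P_iP_{i+1}|$. A deterministic online algorithm chooses $P_i$ knowing only $X_0,\dots,X_i$ (not $n$). $\mathrm{OPT}$ is the minimum cost of a solution when the whole input is known in advance. The competitive ratio of an algorithm is the supremum over inputs of its cost divided by $\mathrm{OPT}$. *)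

theory Defs
  imports "HOL-Analysis.Analysis"
begin

text \<open>Drone positions are points of the plane, modelled as real \<times> real
  (dist on real \<times> real is the Euclidean distance).  An input
  X_0 = (0,0), X_1, ..., X_n is given by the list xs = [x_1, ..., x_n] of the
  x-coordinates of X_1..X_n; the full point list is 0 # xs.\<close>

definition covers :: "real \<Rightarrow> real \<times> real \<Rightarrow> real \<Rightarrow> bool" where
  "covers \<alpha> T x \<longleftrightarrow> fst T - snd T * tan \<alpha> \<le> x \<and> x \<le> fst T + snd T * tan \<alpha>"

definition feasible :: "real \<Rightarrow> real list \<Rightarrow> (nat \<Rightarrow> real \<times> real) \<Rightarrow> bool" where
  "feasible \<alpha> xs P \<longleftrightarrow> P 0 = (0, 0) \<and>
     (\<forall>i \<le> length xs. snd (P i) \<ge> 0 \<and> (\<forall>j \<le> i. covers \<alpha> (P i) ((0 # xs) ! j)))"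

definition sol_cost :: "real list \<Rightarrow> (nat \<Rightarrow> real \<times> real) \<Rightarrow> real" where
  "sol_cost xs P = (\<Sum>i < length xs. dist (P i) (P (Suc i)))"

definition OPT :: "real \<Rightarrow> real list \<Rightarrow> real" where
  "OPT \<alpha> xs = Inf {sol_cost xs P | P. feasible \<alpha> xs P}"

text \<open>A deterministic online algorithm maps the revealed prefix [x_1,...,x_i]
  to the position P_i; it knows neither n nor future points.\<close>
definition online_alg :: "real \<Rightarrow> (real list \<Rightarrow> real \<times> real) \<Rightarrow> bool" where
  "online_alg \<alpha> A \<longleftrightarrow> A [] = (0, 0) \<and>
     (\<forall>ps. snd (A ps) \<ge> 0 \<and> (\<forall>x \<in> set (0 # ps). covers \<alpha> (A ps) x))"

definition alg_cost :: "(real list \<Rightarrow> real \<times> real) \<Rightarrow> real list \<Rightarrow> real" where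
  "alg_cost A xs = sol_cost xs (\<lambda>i. A (take i xs))"

end

theory Submission
  imports Defs
begin

text \<open>For \<open>\<alpha> = pi / 4\<close> a drone at \<open>(x, y)\<close> covers exactly \<open>[x - y, x + y]\<close>. The adversary
  reveals \<open>1, -q, q\<^sup>2, -q\<^sup>3, \<dots>\<close> with \<open>q = 1 + sqrt 2\<close>. After the \<open>k\<close>-th point the online
  position satisfies \<open>y + s x \<ge> q ^ (k - 1)\<close> and \<open>y - s x \<ge> 0\<close>, where \<open>s\<close> is the sign of that
  point, whereas flying straight to the midpoint of the revealed hull costs only
  \<open>sqrt ((1 + 1 / q\<^sup>2) / 2) * q ^ (k - 1)\<close>. Since the sign alternates, the potential
  \<open>(y - s x) + \<beta> (y + s x)\<close>, which is \<open>sqrt (2 (1 + \<beta>\<^sup>2))\<close>-Lipschitz, telescopes in a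
  \<open>\<beta> ^ k\<close>-weighted sum and bounds the weighted costs of the algorithm from below. For a ratio
  below \<open>(1 + sqrt 2) / 2\<close> and \<open>\<beta>\<close> slightly below \<open>1 / q\<close> this bound fails on long inputs.\<close>

lemma covers_pi_div_4: "covers (pi / 4) T x \<longleftrightarrow> \<bar>x - fst T\<bar> \<le> snd T"
  by (auto simp: covers_def tan_45 abs_le_iff)

lemma covers_pi_div_4_signed:
  assumes "\<bar>s\<bar> = 1" and "covers (pi / 4) T x"
  shows "s * x \<le> snd T + s * fst T"
proof -
  have "s * (x - fst T) \<le> \<bar>s * (x - fst T)\<bar>" by (rule abs_ge_self)
  also have "\<dots> = \<bar>x - fst T\<bar>" using assms(1) by (simp add: abs_mult)
  also have "\<dots> \<le> snd T" using assms(2) by (simp add: covers_pi_div_4)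
  finally show ?thesis by (simp add: algebra_simps)
qed

lemma online_alg_feasible:
  assumes "online_alg \<alpha> A"
  shows "feasible \<alpha> xs (\<lambda>i. A (take i xs))"
  unfolding feasible_def
proof (intro conjI allI impI)
  show "A (take 0 xs) = (0, 0)" using assms by (simp add: online_alg_def)
next
  fix i assume "i \<le> length xs"
  show "0 \<le> snd (A (take i xs))" using assms by (simp add: online_alg_def)
next
  fix i j assume "i \<le> length xs" "j \<le> i"
  then have "(0 # xs) ! j = (0 # take i xs) ! j" by (cases j) auto
  also have "\<dots> \<in> set (0 # take i xs)" using \<open>j \<le> i\<close> \<open>i \<le> length xs\<close> by (intro nth_mem) simp
  finally show "covers \<alpha> (A (take i xs)) ((0 # xs) ! j)"
    using assms unfolding online_alg_def by blast
qed

lemma sol_cost_nonneg: "0 \<le> sol_cost xs P"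
  by (simp add: sol_cost_def sum_nonneg)

lemma OPT_nonneg:
  assumes "feasible \<alpha> xs P"
  shows "0 \<le> OPT \<alpha> xs"
  unfolding OPT_def using assms by (intro cInf_greatest) (auto simp: sol_cost_nonneg)

lemma OPT_le_sol_cost:
  assumes "feasible \<alpha> xs P"
  shows "OPT \<alpha> xs \<le> sol_cost xs P"
  unfolding OPT_def using assms
  by (intro cInf_lower) (auto intro: bdd_belowI[of _ 0] simp: sol_cost_nonneg)

lemma OPT_le_dist:
  assumes "xs \<noteq> []" and "0 \<le> snd T" and cover: "\<forall>x \<in> set (0 # xs). covers \<alpha> T x"
  shows "OPT \<alpha> xs \<le> dist (0, 0) T"
proof -
  define P :: "nat \<Rightarrow> real \<times> real" where "P i = (if i = 0 then (0, 0) else T)" for i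
  have "feasible \<alpha> xs P"
    unfolding feasible_def
  proof (intro conjI allI impI)
    fix i j assume "i \<le> length xs" "j \<le> i"
    show "covers \<alpha> (P i) ((0 # xs) ! j)"
    proof (cases "i = 0")
      case True
      then show ?thesis using \<open>j \<le> i\<close> by (simp add: P_def covers_def)
    next
      case False
      have "(0 # xs) ! j \<in> set (0 # xs)" using \<open>i \<le> length xs\<close> \<open>j \<le> i\<close> by (intro nth_mem) simp
      then show ?thesis using cover False unfolding P_def by auto
    qed
  qed (use assms in \<open>auto simp: P_def\<close>)
  moreover obtain m where "length xs = Suc m" using assms(1) by (cases xs) auto
  then have "sol_cost xs P = dist (0, 0) T"
    by (simp add: sol_cost_def sum.lessThan_Suc_shift P_def del: sum.lessThan_Suc)
  ultimately show ?thesis using OPT_le_sol_cost by metis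
qed

lemma OPT_le_interval:
  assumes "xs \<noteq> []" and "lo \<le> 0" "0 \<le> hi" and "\<forall>x \<in> set xs. lo \<le> x \<and> x \<le> hi"
  shows "OPT (pi / 4) xs \<le> sqrt ((lo\<^sup>2 + hi\<^sup>2) / 2)"
proof -
  define T where "T = ((lo + hi) / 2, (hi - lo) / 2)"
  have "\<forall>x \<in> set (0 # xs). covers (pi / 4) T x"
    using assms by (auto simp: covers_pi_div_4 T_def abs_le_iff field_simps)
  then have "OPT (pi / 4) xs \<le> dist (0, 0) T"
    using assms by (intro OPT_le_dist) (auto simp: T_def)
  also have "dist (0, 0) T = sqrt ((lo\<^sup>2 + hi\<^sup>2) / 2)"
    by (simp add: T_def dist_prod_def dist_real_def power2_eq_square field_simps)
  finally show ?thesis .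
qed

definition zigzag :: "real \<Rightarrow> nat \<Rightarrow> real list" where
  "zigzag q k = map (\<lambda>i. (-q) ^ i) [0..<k]"

lemma length_zigzag [simp]: "length (zigzag q k) = k"
  by (simp add: zigzag_def)

lemma zigzag_Suc: "zigzag q (Suc k) = zigzag q k @ [(-q) ^ k]"
  by (simp add: zigzag_def)

lemma set_zigzag: "set (zigzag q k) = {(-q) ^ i | i. i < k}"
  by (auto simp: zigzag_def)

lemma OPT_zigzag_le:
  assumes "1 \<le> q" and "1 \<le> k"
  shows "OPT (pi / 4) (zigzag q k) \<le> sqrt ((1 + 1 / q\<^sup>2) / 2) * q ^ (k - 1)"
proof -
  define Q where "Q = q ^ (k - 1)"
  define s :: real where "s = (-1) ^ (k - 1)"
  have "0 \<le> Q" "0 \<le> Q / q" "Q / q \<le> Q" using assms by (simp_all add: Q_def divide_le_eq)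
  have points: "\<bar>x\<bar> \<le> Q / q \<or> x = s * Q" if "x \<in> set (zigzag q k)" for x
  proof -
    obtain i where "i < k" and x: "x = (-q) ^ i" using \<open>x \<in> set (zigzag q k)\<close> by (auto simp: set_zigzag)
    show ?thesis
    proof (cases "i = k - 1")
      case True
      then show ?thesis by (simp add: x s_def Q_def power_minus[of q])
    next
      case False
      have "q * \<bar>x\<bar> = q ^ Suc i" using assms by (simp add: x power_abs)
      also have "\<dots> \<le> Q" using assms \<open>i < k\<close> False unfolding Q_def by (intro power_increasing) auto
      finally show ?thesis using assms by (simp add: le_divide_eq mult.commute)
    qed
  qed
  obtain lo hi where hull: "lo \<le> 0" "0 \<le> hi" "\<forall>x \<in> set (zigzag q k). lo \<le> x \<and> x \<le> hi"
    and "lo\<^sup>2 + hi\<^sup>2 = (Q / q)\<^sup>2 + Q\<^sup>2"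
  proof (cases "even (k - 1)")
    case True
    then have "s = 1" by (simp add: s_def)
    then have "\<forall>x \<in> set (zigzag q k). - (Q / q) \<le> x \<and> x \<le> Q"
      using points \<open>0 \<le> Q / q\<close> \<open>Q / q \<le> Q\<close> by (fastforce simp: abs_le_iff)
    then show ?thesis using \<open>0 \<le> Q / q\<close> \<open>Q / q \<le> Q\<close> by (intro that[of "- (Q / q)" Q]) auto
  next
    case False
    then have "s = -1" by (simp add: s_def)
    then have "\<forall>x \<in> set (zigzag q k). - Q \<le> x \<and> x \<le> Q / q"
      using points \<open>0 \<le> Q / q\<close> \<open>Q / q \<le> Q\<close> by (fastforce simp: abs_le_iff)
    then show ?thesis using \<open>0 \<le> Q / q\<close> \<open>Q / q \<le> Q\<close> by (intro that[of "- Q" "Q / q"]) auto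
  qed
  moreover have "zigzag q k \<noteq> []" using assms(2) by (simp flip: length_greater_0_conv)
  ultimately have "OPT (pi / 4) (zigzag q k) \<le> sqrt (((Q / q)\<^sup>2 + Q\<^sup>2) / 2)"
    using OPT_le_interval[of _ lo hi] hull by metis
  also have "((Q / q)\<^sup>2 + Q\<^sup>2) / 2 = (1 + 1 / q\<^sup>2) / 2 * Q\<^sup>2"
    using assms by (simp add: field_simps)
  also have "sqrt \<dots> = sqrt ((1 + 1 / q\<^sup>2) / 2) * Q"
    using \<open>0 \<le> Q\<close> by (simp only: real_sqrt_mult real_sqrt_abs abs_of_nonneg)
  finally show ?thesis by (simp add: Q_def)
qed

lemma alg_cost_snoc: "alg_cost A (xs @ [x]) = alg_cost A xs + dist (A xs) (A (xs @ [x]))"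
  by (simp add: alg_cost_def sol_cost_def)

lemma linear_le_norm_dist:
  fixes P Q :: "real \<times> real"
  shows "a * (fst Q - fst P) + b * (snd Q - snd P) \<le> sqrt (a\<^sup>2 + b\<^sup>2) * dist P Q"
proof -
  have "a * (fst Q - fst P) + b * (snd Q - snd P) = inner (a, b) (Q - P)"
    by (cases P, cases Q) simp
  also have "\<dots> \<le> norm (a, b) * norm (Q - P)"
    by (rule norm_cauchy_schwarz)
  also have "\<dots> = sqrt (a\<^sup>2 + b\<^sup>2) * dist P Q"
    by (simp add: norm_Pair dist_norm norm_minus_commute)
  finally show ?thesis .
qed

lemma weighted_step_sum:
  fixes u v C :: "nat \<Rightarrow> real"
  assumes "0 \<le> \<beta>" and "u 0 = 0" "v 0 = 0" "C 0 = 0"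
    and step: "\<And>k. (u (Suc k) - v k) + \<beta> * (v (Suc k) - u k) \<le> M * (C (Suc k) - C k)"
  shows "\<beta> ^ n * (u n + \<beta> * v n) + (1 - \<beta>\<^sup>2) * (\<Sum>k<n. \<beta> ^ k * u k)
    \<le> M * (\<beta> ^ n * C n + (1 - \<beta>) * (\<Sum>k<n. \<beta> ^ k * C k))"
proof (induction n)
  case 0
  then show ?case using assms by simp
next
  case (Suc n)
  \<comment> \<open>both sides grow by \<open>\<beta> ^ Suc n\<close> times the two sides of the step inequality\<close>
  have "\<beta> ^ Suc n * ((u (Suc n) - v n) + \<beta> * (v (Suc n) - u n))
      \<le> \<beta> ^ Suc n * (M * (C (Suc n) - C n))"
    using step \<open>0 \<le> \<beta>\<close> by (simp add: mult_left_mono)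
  then show ?case using Suc.IH by (simp add: algebra_simps power2_eq_square)
qed

lemma weighted_potential_bound:
  fixes u v C a :: "nat \<Rightarrow> real"
  assumes "0 \<le> \<beta>" "\<beta> \<le> 1" "0 \<le> M" and "u 0 = 0" "v 0 = 0" "C 0 = 0"
    and step: "\<And>k. (u (Suc k) - v k) + \<beta> * (v (Suc k) - u k) \<le> M * (C (Suc k) - C k)"
    and "\<And>k. a k \<le> u k" "\<And>k. 0 \<le> v k" "\<And>k. C k \<le> \<rho> * a k"
  shows "(1 - \<beta>) * (1 + \<beta> - M * \<rho>) * (\<Sum>k<n. \<beta> ^ k * a k) \<le> (M * \<rho> - 1) * \<beta> ^ n * a n"
proof -
  let ?S = "\<Sum>k<n. \<beta> ^ k * a k"
  have "a n \<le> u n + \<beta> * v n" using assms by (simp add: add_increasing2)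
  then have "\<beta> ^ n * a n + (1 - \<beta>\<^sup>2) * ?S \<le> \<beta> ^ n * (u n + \<beta> * v n) + (1 - \<beta>\<^sup>2) * (\<Sum>k<n. \<beta> ^ k * u k)"
    using assms by (intro add_mono mult_left_mono sum_mono) (auto simp: power_le_one)
  also have "\<dots> \<le> M * (\<beta> ^ n * C n + (1 - \<beta>) * (\<Sum>k<n. \<beta> ^ k * C k))"
    using assms by (intro weighted_step_sum) auto
  also have "\<dots> \<le> M * (\<beta> ^ n * (\<rho> * a n) + (1 - \<beta>) * (\<Sum>k<n. \<beta> ^ k * (\<rho> * a k)))"
    using assms by (intro mult_left_mono add_mono sum_mono) auto
  also have "\<dots> = M * \<rho> * (\<beta> ^ n * a n + (1 - \<beta>) * ?S)"
    by (simp add: sum_distrib_left algebra_simps)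
  finally show ?thesis by (simp add: algebra_simps power2_eq_square)
qed

lemma signed_potential_step:
  fixes P Q :: "real \<times> real"
  assumes "\<bar>s\<bar> = 1"
  shows "((snd Q - s * fst Q) - (snd P - s * fst P)) + \<beta> * ((snd Q + s * fst Q) - (snd P + s * fst P))
    \<le> sqrt (2 * (1 + \<beta>\<^sup>2)) * dist P Q"
proof -
  have "s\<^sup>2 = 1" using assms by (metis abs_power2 power2_abs power_one)
  then have "(s * (\<beta> - 1))\<^sup>2 + (1 + \<beta>)\<^sup>2 = 2 * (1 + \<beta>\<^sup>2)"
    by (simp add: power_mult_distrib power2_eq_square algebra_simps)
  then show ?thesis
    using linear_le_norm_dist[of "s * (\<beta> - 1)" Q P "1 + \<beta>"] by (simp add: algebra_simps)
qed

lemma online_alg_covers_zigzag_last: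
  assumes "online_alg (pi / 4) A"
  shows "q ^ k \<le> snd (A (zigzag q (Suc k))) + (-1) ^ k * fst (A (zigzag q (Suc k)))"
proof -
  have "(-q) ^ k \<in> set (0 # zigzag q (Suc k))" by (simp add: zigzag_Suc)
  then have "covers (pi / 4) (A (zigzag q (Suc k))) ((-1) ^ k * q ^ k)"
    using assms unfolding online_alg_def power_minus[of q] by blast
  from covers_pi_div_4_signed[OF _ this, of "(-1) ^ k"] show ?thesis
    by (simp add: mult.assoc[symmetric] flip: power_add)
qed

lemma online_alg_covers_origin_signed:
  assumes "online_alg (pi / 4) A" and "\<bar>s\<bar> = 1"
  shows "0 \<le> snd (A ps) + s * fst (A ps)"
  using covers_pi_div_4_signed[OF assms(2), of "A ps" 0] assms(1) by (simp add: online_alg_def)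

lemma online_zigzag_tradeoff:
  fixes A :: "real list \<Rightarrow> real \<times> real" and q \<beta> \<rho> :: real
  defines "M \<equiv> sqrt (2 * (1 + \<beta>\<^sup>2))"
  assumes alg: "online_alg (pi / 4) A" and "1 \<le> q" and "0 < \<beta>" "\<beta> < 1" and "M * \<rho> \<le> 1 + \<beta>"
    and cost: "\<And>k. 1 \<le> k \<Longrightarrow> alg_cost A (zigzag q k) \<le> \<rho> * q ^ (k - 1)"
    and "1 \<le> n"
  shows "(1 - \<beta>) * (1 + \<beta> - M * \<rho>) \<le> (M * \<rho> - 1) * (\<beta> * q) ^ n"
proof -
  define P where "P k = A (zigzag q k)" for k
  \<comment> \<open>for \<open>k \<ge> 1\<close>, \<open>s k\<close> is the sign of the last revealed point \<open>(-q) ^ (k - 1)\<close>\<close>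
  define s :: "nat \<Rightarrow> real" where "s k = (-1) ^ Suc k" for k
  define u where "u k = snd (P k) + s k * fst (P k)" for k
  define v where "v k = snd (P k) - s k * fst (P k)" for k
  define C where "C k = alg_cost A (zigzag q k)" for k
  define a where "a k = (if k = 0 then 0 else q ^ (k - 1))" for k
  have abs_s: "\<bar>s k\<bar> = 1" "\<bar>- s k\<bar> = 1" for k by (simp_all add: s_def)
  have "P 0 = (0, 0)" using alg by (simp add: P_def zigzag_def online_alg_def)
  then have start: "u 0 = 0" "v 0 = 0" "C 0 = 0"
    by (simp_all add: u_def v_def C_def zigzag_def alg_cost_def sol_cost_def)
  have step: "(u (Suc k) - v k) + \<beta> * (v (Suc k) - u k) \<le> M * (C (Suc k) - C k)" for k
    using signed_potential_step[OF abs_s(1), where P = "P k" and Q = "P (Suc k)" and \<beta> = \<beta>]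
    by (simp add: u_def v_def s_def C_def P_def M_def zigzag_Suc alg_cost_snoc)
  have u_ge: "a k \<le> u k" for k
    using start online_alg_covers_zigzag_last[OF alg]
    by (cases k) (simp_all add: a_def u_def s_def P_def)
  have v_ge: "0 \<le> v k" for k
    using online_alg_covers_origin_signed[OF alg abs_s(2)] by (simp add: v_def P_def)
  have C_le: "C k \<le> \<rho> * a k" for k
    using cost[of k] start by (cases k) (simp_all add: C_def a_def)
  have bound: "(1 - \<beta>) * (1 + \<beta> - M * \<rho>) * (\<Sum>k<Suc n. \<beta> ^ k * a k)
      \<le> (M * \<rho> - 1) * \<beta> ^ Suc n * a (Suc n)"
    using assms start step u_ge v_ge C_le
    by (intro weighted_potential_bound[where u = u and v = v and C = C]) (auto simp: M_def)
  have "\<beta> ^ 1 * a 1 \<le> (\<Sum>k<Suc n. \<beta> ^ k * a k)"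
    using assms by (intro member_le_sum) (auto simp: a_def)
  then have "(1 - \<beta>) * (1 + \<beta> - M * \<rho>) * \<beta> \<le> (1 - \<beta>) * (1 + \<beta> - M * \<rho>) * (\<Sum>k<Suc n. \<beta> ^ k * a k)"
    using assms by (intro mult_left_mono) (auto simp: a_def)
  also note bound
  also have "(M * \<rho> - 1) * \<beta> ^ Suc n * a (Suc n) = (M * \<rho> - 1) * (\<beta> * q) ^ n * \<beta>"
    by (simp add: a_def power_mult_distrib)
  finally show ?thesis using \<open>0 < \<beta>\<close> by simp
qed

lemma exists_tradeoff_parameter:
  fixes q r :: real
  defines "c \<equiv> sqrt ((1 + 1 / q\<^sup>2) / 2)"
  assumes "0 < q" and ratio: "r * (1 + 1 / q\<^sup>2) < 1 + 1 / q"
  shows "\<exists>\<beta>. 0 < \<beta> \<and> \<beta> * q < 1 \<and> sqrt (2 * (1 + \<beta>\<^sup>2)) * (r * c) < 1 + \<beta>"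
proof -
  define G where "G \<beta> = 1 + \<beta> - sqrt (2 * (1 + \<beta>\<^sup>2)) * (r * c)" for \<beta>
  have "2 * (1 + (1 / q)\<^sup>2) * ((1 + 1 / q\<^sup>2) / 2) = (1 + 1 / q\<^sup>2)\<^sup>2"
    unfolding power_one_over by (simp add: power2_eq_square)
  then have "sqrt (2 * (1 + (1 / q)\<^sup>2)) * c = 1 + 1 / q\<^sup>2"
    by (simp add: c_def real_sqrt_mult[symmetric])
  then have "G (1 / q) = 1 + 1 / q - r * (1 + 1 / q\<^sup>2)"
    unfolding G_def by (metis mult.left_commute)
  then have "0 < G (1 / q)"
    using ratio by simp
  moreover have "(G \<longlongrightarrow> G (1 / q)) (at_left (1 / q))"
    unfolding G_def by (intro tendsto_intros)
  ultimately have "eventually (\<lambda>\<beta>. 0 < G \<beta>) (at_left (1 / q))"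
    using order_tendstoD(1) by blast
  moreover have "eventually (\<lambda>\<beta>. \<beta> \<in> {0<..<1 / q}) (at_left (1 / q))"
    using \<open>0 < q\<close> by (intro eventually_at_left_real) simp
  ultimately obtain \<beta> where "0 < G \<beta>" "\<beta> \<in> {0<..<1 / q}"
    using eventually_happens'[OF trivial_limit_at_left_real] eventually_conj by blast
  then show ?thesis
    using \<open>0 < q\<close> by (intro exI[of _ \<beta>]) (auto simp: G_def field_simps)
qed

lemma silver_ratio_tradeoff:
  fixes r :: real
  assumes "r < (1 + sqrt 2) / 2"
  shows "r * (1 + 1 / (1 + sqrt 2)\<^sup>2) < 1 + 1 / (1 + sqrt 2)"
proof -
  have "(sqrt 2 - 1) * (1 + sqrt 2) = 1" by (simp add: algebra_simps)
  moreover have "1 + sqrt 2 \<noteq> 0" by (smt (verit) real_sqrt_ge_zero)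
  ultimately have "1 / (1 + sqrt 2) = sqrt 2 - 1" by (simp add: divide_eq_eq)
  moreover have "r * (1 + (sqrt 2 - 1)\<^sup>2) < (1 + sqrt 2) / 2 * (1 + (sqrt 2 - 1)\<^sup>2)"
    using assms by (intro mult_strict_right_mono) (auto simp: add_pos_nonneg)
  moreover have "(1 + sqrt 2) / 2 * (1 + (sqrt 2 - 1)\<^sup>2) = 1 + (sqrt 2 - 1)"
    by (simp add: power2_eq_square algebra_simps)
  ultimately show ?thesis
    unfolding power_one_over[symmetric] by simp
qed

theorem corollary1:
  fixes A :: "real list \<Rightarrow> real \<times> real" and r :: real
  assumes "online_alg (pi / 4) A"
    and "r < (1 + sqrt 2) / 2"
  shows "\<exists>xs. xs \<noteq> [] \<and> alg_cost A xs > r * OPT (pi / 4) xs"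
proof (rule ccontr)
  assume "\<not> ?thesis"
  then have competitive: "alg_cost A xs \<le> r * OPT (pi / 4) xs" if "xs \<noteq> []" for xs
    using that by (auto simp: not_less)
  define q where "q = 1 + sqrt 2"
  define \<rho> where "\<rho> = max r 0 * sqrt ((1 + 1 / q\<^sup>2) / 2)"
  have "1 \<le> q" by (simp add: q_def)
  have "max r 0 * (1 + 1 / q\<^sup>2) < 1 + 1 / q"
    using assms(2) unfolding q_def by (intro silver_ratio_tradeoff) (auto simp: max_def add_pos_nonneg)
  then obtain \<beta> where "0 < \<beta>" "\<beta> * q < 1" and ratio: "sqrt (2 * (1 + \<beta>\<^sup>2)) * \<rho> < 1 + \<beta>"
    using exists_tradeoff_parameter[of q] \<open>1 \<le> q\<close> unfolding \<rho>_def by auto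
  have "\<beta> \<le> \<beta> * q" using \<open>0 < \<beta>\<close> \<open>1 \<le> q\<close> by (simp add: mult_le_cancel_left1)
  then have "\<beta> < 1" using \<open>\<beta> * q < 1\<close> by linarith
  have cost: "alg_cost A (zigzag q k) \<le> \<rho> * q ^ (k - 1)" if "1 \<le> k" for k
  proof -
    have "0 \<le> OPT (pi / 4) (zigzag q k)"
      by (rule OPT_nonneg[OF online_alg_feasible[OF assms(1)]])
    then have "r * OPT (pi / 4) (zigzag q k) \<le> max r 0 * OPT (pi / 4) (zigzag q k)"
      by (simp add: mult_right_mono)
    also have "\<dots> \<le> \<rho> * q ^ (k - 1)"
      using OPT_zigzag_le[OF \<open>1 \<le> q\<close> that] by (simp add: \<rho>_def mult.assoc mult_left_mono)
    finally show ?thesis using competitive[of "zigzag q k"] that by (simp add: zigzag_def)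
  qed
  define M where "M = sqrt (2 * (1 + \<beta>\<^sup>2))"
  have "\<forall>n \<ge> 1. (1 - \<beta>) * (1 + \<beta> - M * \<rho>) \<le> (M * \<rho> - 1) * (\<beta> * q) ^ n"
    using online_zigzag_tradeoff[OF assms(1) \<open>1 \<le> q\<close> \<open>0 < \<beta>\<close> \<open>\<beta> < 1\<close> _ cost] ratio
    by (simp add: M_def)
  moreover have "(\<lambda>n. (M * \<rho> - 1) * (\<beta> * q) ^ n) \<longlonglongrightarrow> 0"
    using \<open>0 < \<beta>\<close> \<open>1 \<le> q\<close> \<open>\<beta> * q < 1\<close> by (intro tendsto_mult_right_zero LIMSEQ_power_zero) simp
  ultimately have "(1 - \<beta>) * (1 + \<beta> - M * \<rho>) \<le> 0"
    using LIMSEQ_le_const by blast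
  then show False using \<open>\<beta> < 1\<close> ratio by (simp add: M_def mult_le_0_iff)
qed

end
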